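(* Let $\mathcal{F}$ be a fusion ring with structure constants $(N_{i,j}^k)$, indexed so that index $1$ is the unit. Suppose indices $i_1,\dots,i_9$ satisfy $N_{i_4,i_1}^{i_6},\ N_{i_5,i_4}^{i_2},\ N_{i_5,i_6}^{i_3},\ N_{i_7,i_9}^{i_1},\ N_{i_2,i_7}^{i_8},\ N_{i_8,i_9}^{i_3}\neq0$ and $\sum_kN_{i_4,i_7}^kN_{i_5^*,i_8}^kN_{i_6,i_9^*}^k=0$. Then $i_j\neq1$ for all $j\in\{4,\dots,9\}$.
   Context: A fusion ring is a ring which is a free $\mathbb{Z}$-module with finite basis $\{b_1,\dots,b_r\}$, $b_ib_j=\sum_kN_{i,j}^kb_k$, $N_{i,j}^k\in\mathbb{Z}_{\ge0}$, associative, unit $b_1$, duality $i\mapsto i^*$ with $N_{i,k}^1=N_{k,i}^1=\delta_{i^*,k}$, and Frobenius reciprocity $N_{i,j}^k=N_{i^*,k}^j=N_{k,j^*}^i$. *)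

theory Defs
  imports Main
begin

text \<open>Index 0 plays the role of the unit b_1 of the paper.
N i j k is the coefficient of b_k in b_i b_j; dual i is i^*.\<close>

definition fusion_ring :: "nat \<Rightarrow> (nat \<Rightarrow> nat \<Rightarrow> nat \<Rightarrow> nat) \<Rightarrow> (nat \<Rightarrow> nat) \<Rightarrow> bool" where
  "fusion_ring r N dual \<longleftrightarrow>
     0 < r \<and>
     (\<forall>i<r. dual i < r) \<and>
     \<comment> \<open>associativity: (b_i b_j) b_k = b_i (b_j b_k)\<close>
     (\<forall>i<r. \<forall>j<r. \<forall>k<r. \<forall>l<r.
        (\<Sum>m<r. N i j m * N m k l) = (\<Sum>m<r. N i m l * N j k m)) \<and>
     \<comment> \<open>unit b_0\<close>
     (\<forall>i<r. \<forall>k<r. N 0 i k = (if i = k then 1 else 0) \<and> N i 0 k = (if i = k then 1 else 0)) \<and>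
     \<comment> \<open>duality\<close>
     (\<forall>i<r. \<forall>k<r. N i k 0 = (if dual i = k then 1 else 0) \<and> N k i 0 = (if dual i = k then 1 else 0)) \<and>
     \<comment> \<open>Frobenius reciprocity\<close>
     (\<forall>i<r. \<forall>j<r. \<forall>k<r. N i j k = N (dual i) k j \<and> N i j k = N k (dual j) i)"

end

theory Submission
  imports Defs
begin

text \<open>If one of i4, i5, i6 is the unit, the unit and Frobenius rules turn the six nonzero
  coefficients into an explicit channel k (namely i7, i8 or i9^* respectively) with
  N_{i4,i7}^k N_{i5^*,i8}^k N_{i6,i9^*}^k \<noteq> 0, contradicting the vanishing sum.
  The cases i7, i9, i8 reduce to i4, i5, i6: the symmetry N_{a,b}^c = N_{b^*,a^*}^{c^*},
  together with the reindexing k \<mapsto> k^*, maps the configuration (i1, ..., i9) to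
  (i2^*, i1^*, i3^*, i7^*, i9^*, i8^*, i4^*, i6^*, i5^*).\<close>

lemma fusion_ring_pos: "fusion_ring r N dual \<Longrightarrow> 0 < r"
  unfolding fusion_ring_def by (elim conjE)

lemma fusion_ring_dual_less: "fusion_ring r N dual \<Longrightarrow> i < r \<Longrightarrow> dual i < r"
  unfolding fusion_ring_def by (elim conjE) blast

lemma fusion_ring_unit:
  "fusion_ring r N dual \<Longrightarrow>
     \<forall>i<r. \<forall>k<r. N 0 i k = (if i = k then 1 else 0) \<and> N i 0 k = (if i = k then 1 else 0)"
  unfolding fusion_ring_def by (elim conjE)

lemma fusion_ring_duality:
  "fusion_ring r N dual \<Longrightarrow>
     \<forall>i<r. \<forall>k<r. N i k 0 = (if dual i = k then 1 else 0) \<and> N k i 0 = (if dual i = k then 1 else 0)"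
  unfolding fusion_ring_def by (elim conjE)

lemma fusion_ring_frobenius:
  "fusion_ring r N dual \<Longrightarrow>
     \<forall>i<r. \<forall>j<r. \<forall>k<r. N i j k = N (dual i) k j \<and> N i j k = N k (dual j) i"
  unfolding fusion_ring_def by (elim conjE)

lemma fusion_ring_unit_left:
  "fusion_ring r N dual \<Longrightarrow> i < r \<Longrightarrow> k < r \<Longrightarrow> N 0 i k = (if i = k then 1 else 0)"
  using fusion_ring_unit by blast

lemma fusion_ring_unit_right:
  "fusion_ring r N dual \<Longrightarrow> i < r \<Longrightarrow> k < r \<Longrightarrow> N i 0 k = (if i = k then 1 else 0)"
  using fusion_ring_unit by blast

lemma fusion_ring_unit_coeff_right:
  "fusion_ring r N dual \<Longrightarrow> i < r \<Longrightarrow> k < r \<Longrightarrow> N i k 0 = (if dual i = k then 1 else 0)"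
  using fusion_ring_duality by blast

lemma fusion_ring_unit_coeff_left:
  "fusion_ring r N dual \<Longrightarrow> i < r \<Longrightarrow> k < r \<Longrightarrow> N k i 0 = (if dual i = k then 1 else 0)"
  using fusion_ring_duality by blast

lemma fusion_ring_frobenius_left:
  "fusion_ring r N dual \<Longrightarrow> i < r \<Longrightarrow> j < r \<Longrightarrow> k < r \<Longrightarrow> N i j k = N (dual i) k j"
  using fusion_ring_frobenius by blast

lemma fusion_ring_frobenius_right:
  "fusion_ring r N dual \<Longrightarrow> i < r \<Longrightarrow> j < r \<Longrightarrow> k < r \<Longrightarrow> N i j k = N k (dual j) i"
  using fusion_ring_frobenius by blast

lemma fusion_ring_dual_zero:
  assumes "fusion_ring r N dual" shows "dual 0 = 0"
proof -
  have "0 < r" by (rule fusion_ring_pos[OF assms])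
  have "N 0 0 0 = 1"
    using fusion_ring_unit_left[OF assms \<open>0 < r\<close> \<open>0 < r\<close>] by simp
  then show ?thesis
    using fusion_ring_unit_coeff_right[OF assms \<open>0 < r\<close> \<open>0 < r\<close>] by (cases "dual 0 = 0") auto
qed

lemma fusion_ring_dual_dual:
  assumes "fusion_ring r N dual" "i < r" shows "dual (dual i) = i"
proof -
  have "dual i < r" by (rule fusion_ring_dual_less[OF assms])
  have "N (dual i) i 0 = 1"
    using fusion_ring_unit_coeff_left[OF assms(1,2) \<open>dual i < r\<close>] by simp
  then show ?thesis
    using fusion_ring_unit_coeff_right[OF assms(1) \<open>dual i < r\<close> assms(2)]
    by (cases "dual (dual i) = i") auto
qed

lemma fusion_ring_dual_eq_zero_iff:
  assumes "fusion_ring r N dual" "i < r" shows "dual i = 0 \<longleftrightarrow> i = 0"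
  using fusion_ring_dual_dual[OF assms] fusion_ring_dual_zero[OF assms(1)] by auto

lemma fusion_ring_reverse:
  assumes "fusion_ring r N dual" "i < r" "j < r" "k < r"
  shows "N i j k = N (dual j) (dual i) (dual k)"
proof -
  have "dual i < r" "dual k < r"
    using assms by (simp_all add: fusion_ring_dual_less)
  have "N i j k = N (dual i) k j"
    by (rule fusion_ring_frobenius_left[OF assms])
  also have "\<dots> = N j (dual k) (dual i)"
    by (rule fusion_ring_frobenius_right[OF assms(1) \<open>dual i < r\<close> assms(4,3)])
  also have "\<dots> = N (dual j) (dual i) (dual k)"
    by (rule fusion_ring_frobenius_left[OF assms(1,3) \<open>dual k < r\<close> \<open>dual i < r\<close>])
  finally show ?thesis .
qed

lemma fusion_ring_cyclic:
  assumes "fusion_ring r N dual" "a < r" "b < r" "c < r"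
  shows "N a b (dual c) = N b c (dual a)"
proof -
  have "dual a < r" "dual c < r"
    using assms by (simp_all add: fusion_ring_dual_less)
  have "N a b (dual c) = N (dual a) (dual c) b"
    by (rule fusion_ring_frobenius_left[OF assms(1-3) \<open>dual c < r\<close>])
  also have "\<dots> = N b c (dual a)"
    by (rule fusion_ring_frobenius_right[OF assms(1,3,4) \<open>dual a < r\<close>, symmetric])
  finally show ?thesis .
qed

locale no_common_channel_config =
  fixes r :: nat and N :: "nat \<Rightarrow> nat \<Rightarrow> nat \<Rightarrow> nat" and dual :: "nat \<Rightarrow> nat"
    and i1 i2 i3 i4 i5 i6 i7 i8 i9 :: nat
  assumes fusion: "fusion_ring r N dual"
    and less: "i1 < r" "i2 < r" "i3 < r" "i4 < r" "i5 < r" "i6 < r" "i7 < r" "i8 < r" "i9 < r"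
    and nonzero: "N i4 i1 i6 \<noteq> 0" "N i5 i4 i2 \<noteq> 0" "N i5 i6 i3 \<noteq> 0"
      "N i7 i9 i1 \<noteq> 0" "N i2 i7 i8 \<noteq> 0" "N i8 i9 i3 \<noteq> 0"
    and no_common_channel: "k < r \<Longrightarrow> N i4 i7 k = 0 \<or> N (dual i5) i8 k = 0 \<or> N i6 (dual i9) k = 0"
begin

lemma i4_nonzero: "i4 \<noteq> 0"
proof
  assume "i4 = 0"
  with nonzero(1,2) less have "i6 = i1" "i5 = i2"
    by (simp_all add: fusion_ring_unit_left[OF fusion] fusion_ring_unit_right[OF fusion]
        split: if_splits)
  with nonzero(4,5) less \<open>i4 = 0\<close>
  have "N i4 i7 i7 \<noteq> 0" "N (dual i5) i8 i7 \<noteq> 0" "N i6 (dual i9) i7 \<noteq> 0"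
    by (simp_all add: fusion_ring_unit_left[OF fusion] fusion_ring_frobenius_left[OF fusion, of i2 i7 i8]
        fusion_ring_frobenius_right[OF fusion, of i7 i9 i1])
  with no_common_channel[OF less(7)] show False by simp
qed

lemma i5_nonzero: "i5 \<noteq> 0"
proof
  assume "i5 = 0"
  with nonzero(2,3) less have "i4 = i2" "i6 = i3"
    by (simp_all add: fusion_ring_unit_left[OF fusion] split: if_splits)
  with nonzero(5,6) less \<open>i5 = 0\<close>
  have "N i4 i7 i8 \<noteq> 0" "N (dual i5) i8 i8 \<noteq> 0" "N i6 (dual i9) i8 \<noteq> 0"
    by (simp_all add: fusion_ring_unit_left[OF fusion] fusion_ring_dual_zero[OF fusion]
        fusion_ring_frobenius_right[OF fusion, of i8 i9 i3])
  with no_common_channel[OF less(8)] show False by simp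
qed

lemma i6_nonzero: "i6 \<noteq> 0"
proof
  assume "i6 = 0"
  with nonzero(1,3) less have "i1 = dual i4" "i5 = i3"
    by (simp_all add: fusion_ring_unit_coeff_right[OF fusion] fusion_ring_unit_right[OF fusion]
        split: if_splits)
  have "dual i3 < r" "dual i9 < r"
    using less by (simp_all add: fusion_ring_dual_less[OF fusion])
  have "N i4 i7 (dual i9) = N i7 i9 (dual i4)"
    using fusion_ring_cyclic[OF fusion less(7,9,4)] fusion_ring_cyclic[OF fusion less(9,4,7)] by simp
  with nonzero(4) \<open>i1 = dual i4\<close> have "N i4 i7 (dual i9) \<noteq> 0" by simp
  have "N (dual i3) i8 (dual i9) = N i8 i9 (dual (dual i3))"
    using fusion_ring_cyclic[OF fusion less(8,9) \<open>dual i3 < r\<close>]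
      fusion_ring_cyclic[OF fusion less(9) \<open>dual i3 < r\<close> less(8)] by simp
  with nonzero(6) \<open>i5 = i3\<close> have "N (dual i5) i8 (dual i9) \<noteq> 0"
    by (simp add: fusion_ring_dual_dual[OF fusion less(3)])
  moreover have "N i6 (dual i9) (dual i9) \<noteq> 0"
    using \<open>i6 = 0\<close> \<open>dual i9 < r\<close> by (simp add: fusion_ring_unit_left[OF fusion])
  ultimately show False
    using no_common_channel[OF \<open>dual i9 < r\<close>] \<open>N i4 i7 (dual i9) \<noteq> 0\<close> by simp
qed

lemma reverse:
  "no_common_channel_config r N dual
    (dual i2) (dual i1) (dual i3) (dual i7) (dual i9) (dual i8) (dual i4) (dual i6) (dual i5)"
proof
  note reversal = fusion_ring_reverse[OF fusion]
  show "fusion_ring r N dual" by (rule fusion)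
  show "dual i1 < r" "dual i2 < r" "dual i3 < r" "dual i4 < r" "dual i5 < r" "dual i6 < r"
    "dual i7 < r" "dual i8 < r" "dual i9 < r"
    using less by (simp_all add: fusion_ring_dual_less[OF fusion])
  show "N (dual i7) (dual i2) (dual i8) \<noteq> 0" "N (dual i9) (dual i7) (dual i1) \<noteq> 0"
    "N (dual i9) (dual i8) (dual i3) \<noteq> 0" "N (dual i4) (dual i5) (dual i2) \<noteq> 0"
    "N (dual i1) (dual i4) (dual i6) \<noteq> 0" "N (dual i6) (dual i5) (dual i3) \<noteq> 0"
    using nonzero less
    by (simp_all add: reversal[of i2 i7 i8] reversal[of i7 i9 i1] reversal[of i8 i9 i3]
        reversal[of i5 i4 i2] reversal[of i4 i1 i6] reversal[of i5 i6 i3])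
  fix k assume "k < r"
  then have "dual k < r" by (rule fusion_ring_dual_less[OF fusion])
  with no_common_channel[OF this] less \<open>k < r\<close>
  show "N (dual i7) (dual i4) k = 0 \<or> N (dual (dual i9)) (dual i6) k = 0 \<or>
      N (dual i8) (dual (dual i5)) k = 0"
    by (auto simp add: reversal[of i4 i7 "dual k"] reversal[of "dual i5" i8 "dual k"]
        reversal[of i6 "dual i9" "dual k"] fusion_ring_dual_less[OF fusion]
        fusion_ring_dual_dual[OF fusion])
qed

end

theorem lemma7p14:
  fixes r :: nat and N :: "nat \<Rightarrow> nat \<Rightarrow> nat \<Rightarrow> nat" and dual :: "nat \<Rightarrow> nat"
    and i1 i2 i3 i4 i5 i6 i7 i8 i9 :: nat
  assumes "fusion_ring r N dual"
    and "i1 < r" "i2 < r" "i3 < r" "i4 < r" "i5 < r" "i6 < r" "i7 < r" "i8 < r" "i9 < r"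
    and "N i4 i1 i6 \<noteq> 0" "N i5 i4 i2 \<noteq> 0" "N i5 i6 i3 \<noteq> 0"
    and "N i7 i9 i1 \<noteq> 0" "N i2 i7 i8 \<noteq> 0" "N i8 i9 i3 \<noteq> 0"
    and "(\<Sum>k<r. N i4 i7 k * N (dual i5) i8 k * N i6 (dual i9) k) = 0"
  shows "i4 \<noteq> 0 \<and> i5 \<noteq> 0 \<and> i6 \<noteq> 0 \<and> i7 \<noteq> 0 \<and> i8 \<noteq> 0 \<and> i9 \<noteq> 0"
proof -
  interpret no_common_channel_config r N dual i1 i2 i3 i4 i5 i6 i7 i8 i9
    using assms by unfold_locales simp_all
  interpret reversed: no_common_channel_config r N dual
      "dual i2" "dual i1" "dual i3" "dual i7" "dual i9" "dual i8" "dual i4" "dual i6" "dual i5"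
    by (rule reverse)
  have "dual i7 \<noteq> 0" "dual i9 \<noteq> 0" "dual i8 \<noteq> 0"
    by (rule reversed.i4_nonzero reversed.i5_nonzero reversed.i6_nonzero)+
  with i4_nonzero i5_nonzero i6_nonzero show ?thesis
    using assms(8-10) by (simp add: fusion_ring_dual_eq_zero_iff[OF assms(1)])
qed

end
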